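(* Let $L\ge2$, $k\ge2$ be integers, $\kappa:\{1,\dots,k-1\}\times\mathbb{N}\to\{0,\dots,L-1\}$ a map, and let $(a(n))_{n=0}^\infty$ be an $(L,k,\kappa)$-TM sequence. Then $(a(n))_{n=0}^\infty$ is ultimately periodic if and only if there exists an integer $A\ge0$ such that $$\kappa(s,A+y)\equiv\kappa(1,A)\,s\,k^y\pmod L$$ for all $1\le s\le k-1$ and all $y\in\mathbb{N}$. Moreover, if $(a(n))_{n=0}^\infty$ is not ultimately periodic, then none of its equally spaced subsequences $(a(N+tl))_{t=0}^\infty$ ($N\ge0$, $l>0$) is ultimately periodic.
   Context: $\mathbb{N}$ is the set of non-negative integers. Let $a_0,\dots,a_{L-1}$ be pairwise distinct complex numbers and $f$ the map on $\{a_0,\dots,a_{L-1}\}$ with $f(a_i)=a_{i+1}$ (indices mod $L$), extended letterwise to finite words; $f^j$ is its $j$-fold iterate, $f^0$ the identity. Define $A_0=a_0$ and $A_{n+1}=A_n\,f^{\kappa(1,n)}(A_n)\cdots f^{\kappa(k-1,n)}(A_n)$ (concatenation); $A_n$ is a prefix of $A_{n+1}$ and the infinite word $\lim A_n$, indexed from $0$, is the $(L,k,\kappa)$-TM sequence. A sequence $(b(n))$ is ultimately periodic if there are $N\ge0$, $l>0$ with $b(n)=b(n+l)$ for all $n\ge N$. *)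

theory Defs
  imports Complex_Main
begin

text \<open>The map f on the alphabet {a_0,...,a_{L-1}}: f(a_i) = a_{(i+1) mod L}.
  Outside the alphabet it is (irrelevantly) the identity.\<close>
definition TM_f :: "(nat \<Rightarrow> complex) \<Rightarrow> nat \<Rightarrow> complex \<Rightarrow> complex" where
  "TM_f a L x = (if \<exists>i<L. x = a i then a (Suc (THE i. i < L \<and> x = a i) mod L) else x)"

fun TM_word :: "(nat \<Rightarrow> complex) \<Rightarrow> nat \<Rightarrow> nat \<Rightarrow> (nat \<Rightarrow> nat \<Rightarrow> nat) \<Rightarrow> nat \<Rightarrow> complex list" where
  "TM_word a L k \<kappa> 0 = [a 0]"
| "TM_word a L k \<kappa> (Suc n) =
     TM_word a L k \<kappa> n @
     concat (map (\<lambda>s. map ((TM_f a L) ^^ (\<kappa> s n)) (TM_word a L k \<kappa> n)) [1..<k])"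

text \<open>The infinite word lim A_n, indexed from 0. Since A_n is a prefix of A_{n+1} and
  |A_n| = k^n > n for k \<ge> 2, its m-th letter is the m-th letter of A_m.\<close>
definition TM_seq :: "(nat \<Rightarrow> complex) \<Rightarrow> nat \<Rightarrow> nat \<Rightarrow> (nat \<Rightarrow> nat \<Rightarrow> nat) \<Rightarrow> nat \<Rightarrow> complex" where
  "TM_seq a L k \<kappa> m = TM_word a L k \<kappa> m ! m"

definition ult_periodic :: "(nat \<Rightarrow> 'b) \<Rightarrow> bool" where
  "ult_periodic b \<longleftrightarrow> (\<exists>N l. l > 0 \<and> (\<forall>n\<ge>N. b n = b (n + l)))"

end

theory Submission
  imports Defs "HOL-Number_Theory.Cong"
begin

text \<open>
  The \<open>m\<close>-th letter of the sequence is \<open>a\<^sub>i\<close> with \<open>i \<equiv> E(m) (mod L)\<close>, where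
  \<open>E(m) = \<Sum> \<kappa>(d\<^sub>i, i)\<close> runs over the nonzero base-\<open>k\<close> digits \<open>d\<^sub>i\<close> of \<open>m\<close>: the digit
  \<open>d\<^sub>n\<close> selects the block \<open>f\<^bsup>\<kappa>(d\<^sub>n,n)\<^esup>(A\<^sub>n)\<close> of \<open>A\<^sub>n\<^sub>+\<^sub>1\<close>.
  If \<open>\<kappa>(s, A + y) \<equiv> \<kappa>(1, A) s k\<^sup>y\<close>, the digits of \<open>m\<close> at positions \<open>\<ge> A\<close> contribute
  \<open>\<kappa>(1, A) \<lfloor>m / k\<^sup>A\<rfloor>\<close> to \<open>E(m)\<close> modulo \<open>L\<close>, so \<open>L k\<^sup>A\<close> is a period.

  Conversely, let the letters at \<open>N + t l\<close> be eventually periodic in \<open>t\<close>, so that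
  the letters at positions \<open>\<equiv> N (mod l)\<close> are eventually \<open>P\<close>-periodic for \<open>P = p l\<close>.
  Write \<open>E\<^sub>J\<close> for the digit sum read from level \<open>J\<close> on. For large \<open>J\<close>, compare the
  positions \<open>u + v k\<^sup>J\<close> and \<open>u + v k\<^sup>J + P\<close> with \<open>u\<close> just below \<open>k\<^sup>J\<close>, so that adding
  \<open>P\<close> carries into level \<open>J\<close>: the increment \<open>E\<^sub>J(v+1) - E\<^sub>J(v)\<close> depends only on the
  residue of \<open>v\<close> mod \<open>l\<close>. Hence \<open>E\<^sub>J(v + l) \<equiv> E\<^sub>J(v) + E\<^sub>J(l)\<close>, and applying this across a
  carry into level \<open>J + l\<close> shows that all increments of \<open>E\<^sub>J\<^sub>+\<^sub>l\<close> equal \<open>\<kappa>(1, J + l)\<close>.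
  So \<open>E\<^sub>j(x) \<equiv> x \<kappa>(1, j)\<close> for all large \<open>j\<close>; taking \<open>x = s\<close> and \<open>x = k\<close> gives
  \<open>\<kappa>(s, j) \<equiv> s \<kappa>(1, j)\<close> and \<open>\<kappa>(1, j + 1) \<equiv> k \<kappa>(1, j)\<close>, which is the condition.
\<close>

fun digit_sum ::
  "nat \<Rightarrow> (nat \<Rightarrow> nat \<Rightarrow> 'a::comm_monoid_add) \<Rightarrow> nat \<Rightarrow> nat \<Rightarrow> 'a" where
  "digit_sum k w j v =
     (if v = 0 \<or> k < 2 then 0 else w (v mod k) j + digit_sum k w (Suc j) (v div k))"

declare digit_sum.simps [simp del]

lemma digit_sum_0 [simp]: "digit_sum k w j 0 = 0"
  by (simp add: digit_sum.simps)

lemma self_less_power: "2 \<le> k \<Longrightarrow> n < k ^ n"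
  using less_exp [of n] power_mono [of 2 k n] by linarith

context
  fixes k :: nat and w :: "nat \<Rightarrow> nat \<Rightarrow> 'a::comm_monoid_add"
  assumes k: "2 \<le> k" and w_0: "\<And>j. w 0 j = 0"
begin

lemma digit_sum_rec: "digit_sum k w j v = w (v mod k) j + digit_sum k w (Suc j) (v div k)"
  using k w_0 by (cases "v = 0") (simp_all add: digit_sum.simps [of k w j v])

lemma digit_sum_digit: "q < k \<Longrightarrow> digit_sum k w j q = w q j"
  using digit_sum_rec [of j q] by simp

lemma digit_sum_split:
  "r < k ^ n \<Longrightarrow>
    digit_sum k w j (r + q * k ^ n) = digit_sum k w j r + digit_sum k w (j + n) q"
proof (induction n arbitrary: j r)
  case 0
  then show ?case by simp
next
  case (Suc n)
  have "(r + q * k ^ Suc n) mod k = r mod k"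
    by (simp add: mult.left_commute)
  moreover have "(r + q * k ^ Suc n) div k = r div k + q * k ^ n"
    using k by (simp add: mult.left_commute)
  moreover have "r div k < k ^ n"
    using Suc.prems by (simp add: less_mult_imp_div_less mult.commute)
  ultimately show ?case
    using Suc.IH [of "r div k" "Suc j"] digit_sum_rec [of j "r + q * k ^ Suc n"]
      digit_sum_rec [of j r]
    by (simp add: add.assoc)
qed

end

lemma of_nat_digit_sum:
  "of_nat (digit_sum k w j v) = digit_sum k (\<lambda>s i. of_nat (w s i)) j v"
  by (induction k w j v rule: digit_sum.induct) (simp add: digit_sum.simps)

text \<open>The digit \<open>0\<close> selects the unshifted first block \<open>A\<^sub>n\<close> of \<open>A\<^sub>n\<^sub>+\<^sub>1\<close>.\<close>

definition tm_weight :: "(nat \<Rightarrow> nat \<Rightarrow> nat) \<Rightarrow> nat \<Rightarrow> nat \<Rightarrow> nat" where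
  "tm_weight \<kappa> s j = (if s = 0 then 0 else \<kappa> s j)"

lemma tm_weight_0 [simp]: "tm_weight \<kappa> 0 j = 0"
  by (simp add: tm_weight_def)

lemma TM_f_power:
  assumes "inj_on a {..<L}" and "i < L"
  shows "(TM_f a L ^^ j) (a i) = a ((i + j) mod L)"
proof (induction j)
  case 0
  then show ?case using assms(2) by simp
next
  case (Suc j)
  have i: "(i + j) mod L < L"
    using assms(2) by simp
  then have "(THE i'. i' < L \<and> a ((i + j) mod L) = a i') = (i + j) mod L"
    using assms(1) by (intro the_equality) (auto simp: inj_on_def)
  then have "TM_f a L (a ((i + j) mod L)) = a (Suc ((i + j) mod L) mod L)"
    using i by (auto simp: TM_f_def)
  then show ?case
    using Suc by (simp add: mod_Suc_eq)
qed

lemma nth_concat_map_map: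
  assumes "length xs = n" and "i < length ys" and "r < n"
  shows "concat (map (\<lambda>y. map (g y) xs) ys) ! (i * n + r) = g (ys ! i) (xs ! r)"
  using assms(2)
proof (induction ys arbitrary: i)
  case Nil
  then show ?case by simp
next
  case (Cons y ys)
  then show ?case
    using assms by (cases i) (auto simp: nth_append add.assoc)
qed

lemma length_TM_word: "1 \<le> k \<Longrightarrow> length (TM_word a L k \<kappa> n) = k ^ n"
proof (induction n)
  case (Suc n)
  then have "length (TM_word a L k \<kappa> (Suc n)) = k ^ n + (k - 1) * k ^ n"
    by (simp add: length_concat o_def sum_list_triv)
  also have "\<dots> = k ^ Suc n"
    using Suc.prems by (simp add: algebra_simps)
  finally show ?case .
qed simp

lemma nth_TM_word:
  assumes "inj_on a {..<L}" and "1 \<le> L" and "2 \<le> k" and "m < k ^ n"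
  shows "TM_word a L k \<kappa> n ! m = a (digit_sum k (tm_weight \<kappa>) 0 m mod L)"
  using assms(4)
proof (induction n arbitrary: m)
  case 0
  then show ?case by simp
next
  case (Suc n)
  let ?W = "TM_word a L k \<kappa> n" and ?S = "digit_sum k (tm_weight \<kappa>)"
  have len: "length ?W = k ^ n"
    using assms(3) by (simp add: length_TM_word)
  show ?case
  proof (cases "m < k ^ n")
    case True
    then show ?thesis using Suc.IH len by (simp add: nth_append)
  next
    case False
    define q r where "q = m div k ^ n" and "r = m mod k ^ n"
    have kn: "0 < k ^ n" using assms(3) by simp
    have q: "1 \<le> q" "q < k"
      using False Suc.prems kn unfolding q_def
      by (simp_all add: Suc_le_eq div_greater_zero_iff less_mult_imp_div_less mult.commute)
    have r: "r < k ^ n"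
      using kn by (simp add: r_def)
    have m: "m = r + q * k ^ n"
      by (simp add: q_def r_def mod_div_mult_eq)
    have "TM_word a L k \<kappa> (Suc n) ! m
        = concat (map (\<lambda>s. map (TM_f a L ^^ \<kappa> s n) ?W) [1..<k]) ! ((q - 1) * k ^ n + r)"
      using False len m q by (simp add: nth_append algebra_simps)
    also have "\<dots> = (TM_f a L ^^ \<kappa> q n) (?W ! r)"
      using nth_concat_map_map [OF len, of "q - 1" "[1..<k]" r "\<lambda>s. TM_f a L ^^ \<kappa> s n"] q r
      by simp
    also have "\<dots> = a ((?S 0 r mod L + \<kappa> q n) mod L)"
      using Suc.IH [OF r] TM_f_power [OF assms(1)] assms(2) by simp
    also have "\<dots> = a (?S 0 m mod L)"
      using digit_sum_split [of k "tm_weight \<kappa>"] digit_sum_digit [of k "tm_weight \<kappa>"]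
        assms(3) m q r
      by (simp add: tm_weight_def mod_add_left_eq)
    finally show ?thesis .
  qed
qed

lemma TM_seq_eq_iff_cong:
  assumes "inj_on a {..<L}" and "1 \<le> L" and "2 \<le> k"
  shows "TM_seq a L k \<kappa> m = TM_seq a L k \<kappa> m' \<longleftrightarrow>
    [digit_sum k (\<lambda>s j. int (tm_weight \<kappa> s j)) 0 m =
     digit_sum k (\<lambda>s j. int (tm_weight \<kappa> s j)) 0 m'] (mod int L)"
proof -
  have "TM_seq a L k \<kappa> n = a (digit_sum k (tm_weight \<kappa>) 0 n mod L)" for n
    using nth_TM_word [OF assms self_less_power [OF assms(3)]] by (simp add: TM_seq_def)
  moreover have "a (x mod L) = a (y mod L) \<longleftrightarrow> x mod L = y mod L" for x y
    using assms(1,2) by (auto simp: inj_on_def)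
  ultimately show ?thesis
    by (simp add: cong_int_iff flip: of_nat_digit_sum) (simp add: cong_def)
qed

definition linear_weights_from ::
  "nat \<Rightarrow> nat \<Rightarrow> (nat \<Rightarrow> nat \<Rightarrow> int) \<Rightarrow> nat \<Rightarrow> bool" where
  "linear_weights_from k L w A \<longleftrightarrow>
     (\<forall>j\<ge>A. (\<forall>s\<in>{1..k-1}. [w s j = int s * w 1 j] (mod int L)) \<and>
       [w 1 (Suc j) = int k * w 1 j] (mod int L))"

lemma cong_add_of_periodic_increments:
  fixes f :: "nat \<Rightarrow> int"
  assumes "f 0 = 0" and "\<And>v. [f (Suc v + l) - f (v + l) = f (Suc v) - f v] (mod m)"
  shows "[f (v + l) = f v + f l] (mod m)"
proof (induction v)
  case (Suc v)
  from cong_add [OF Suc.IH assms(2) [of v]] show ?case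
    by (simp add: add.commute)
qed (simp add: assms(1))

lemma cong_linear_of_const_increments:
  fixes f :: "nat \<Rightarrow> int"
  assumes "f 0 = 0" and "\<And>x. [f (Suc x) = f x + c] (mod m)"
  shows "[f x = int x * c] (mod m)"
proof (induction x)
  case (Suc x)
  from cong_trans [OF assms(2) cong_add [OF Suc.IH cong_refl]] show ?case
    by (simp add: algebra_simps)
qed (simp add: assms(1))

lemma exists_shift_to_residue:
  fixes l x c :: nat
  assumes "0 < l"
  shows "\<exists>d<l. (x + d) mod l = c mod l"
proof (intro exI conjI)
  \<comment> \<open>\<open>-x \<equiv> x (l - 1) (mod l)\<close>\<close>
  show "(c + x * (l - 1)) mod l < l"
    using assms by simp
  have "x + (c + x * (l - 1)) = c + x * l"
    using assms by (simp add: algebra_simps mult_eq_if)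
  then show "(x + (c + x * (l - 1)) mod l) mod l = c mod l"
    by (metis mod_add_right_eq mod_mult_self1)
qed

lemma linear_weights_from_iff:
  fixes w :: "nat \<Rightarrow> nat \<Rightarrow> int"
  assumes k: "2 \<le> k"
  shows "linear_weights_from k L w A \<longleftrightarrow>
     (\<forall>s\<in>{1..k-1}. \<forall>y. [w s (A + y) = w 1 A * int s * int k ^ y] (mod int L))"
proof
  assume lin: "linear_weights_from k L w A"
  have one: "[w 1 (A + y) = w 1 A * int k ^ y] (mod int L)" for y
  proof (induction y)
    case (Suc y)
    have "[w 1 (A + Suc y) = int k * w 1 (A + y)] (mod int L)"
      using lin by (simp add: linear_weights_from_def)
    from cong_trans [OF this cong_scalar_left [OF Suc.IH]] show ?case
      by (simp add: algebra_simps)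
  qed simp
  show "\<forall>s\<in>{1..k-1}. \<forall>y. [w s (A + y) = w 1 A * int s * int k ^ y] (mod int L)"
  proof (intro ballI allI)
    fix s y assume "s \<in> {1..k-1}"
    then have "[w s (A + y) = int s * w 1 (A + y)] (mod int L)"
      using lin by (simp add: linear_weights_from_def)
    from cong_trans [OF this cong_scalar_left [OF one]]
    show "[w s (A + y) = w 1 A * int s * int k ^ y] (mod int L)"
      by (simp add: algebra_simps)
  qed
next
  assume geom:
    "\<forall>s\<in>{1..k-1}. \<forall>y. [w s (A + y) = w 1 A * int s * int k ^ y] (mod int L)"
  have one: "[w 1 (A + y) = w 1 A * int k ^ y] (mod int L)" for y
    using geom k by force
  show "linear_weights_from k L w A"
    unfolding linear_weights_from_def
  proof (intro allI impI conjI ballI)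
    fix j s assume j: "A \<le> j" and s: "s \<in> {1..k-1}"
    then obtain y where y: "j = A + y"
      using le_iff_add by blast
    have "[w s j = int s * (w 1 A * int k ^ y)] (mod int L)"
      using geom s y by (metis mult.assoc mult.commute)
    with cong_scalar_left [OF cong_sym [OF one [of y]], of "int s"]
    show "[w s j = int s * w 1 j] (mod int L)"
      using y cong_trans by blast
  next
    fix j assume "A \<le> j"
    then obtain y where y: "j = A + y"
      using le_iff_add by blast
    have "[w 1 (Suc j) = int k * (w 1 A * int k ^ y)] (mod int L)"
      using one [of "Suc y"] y by (simp add: ac_simps)
    with cong_scalar_left [OF cong_sym [OF one [of y]], of "int k"]
    show "[w 1 (Suc j) = int k * w 1 j] (mod int L)"
      using y cong_trans by blast
  qed
qed

context
  fixes k L :: nat and w :: "nat \<Rightarrow> nat \<Rightarrow> int"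
  assumes k: "2 \<le> k" and w_0: "\<And>j. w 0 j = 0"
begin

lemma digit_sum_cong_linear:
  assumes lin: "linear_weights_from k L w A" and "A \<le> j"
  shows "[digit_sum k w j x = int x * w 1 j] (mod int L)"
  using assms(2)
proof (induction x arbitrary: j rule: less_induct)
  case (less x)
  show ?case
  proof (cases "x = 0")
    case False
    have "x mod k < k"
      using k by simp
    then have low: "[w (x mod k) j = int (x mod k) * w 1 j] (mod int L)"
      using lin less.prems w_0 by (cases "x mod k = 0") (auto simp: linear_weights_from_def)
    have "[digit_sum k w (Suc j) (x div k) = int (x div k) * w 1 (Suc j)] (mod int L)"
      using less.IH [of "x div k" "Suc j"] less.prems False k by simp
    moreover have "[int (x div k) * w 1 (Suc j) = int (x div k) * (int k * w 1 j)] (mod int L)"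
      using lin less.prems by (intro cong_scalar_left) (simp add: linear_weights_from_def)
    ultimately have high:
      "[digit_sum k w (Suc j) (x div k) = int (x div k) * (int k * w 1 j)] (mod int L)"
      by (rule cong_trans)
    have "[digit_sum k w j x = int (x mod k) * w 1 j + int (x div k) * (int k * w 1 j)] (mod int L)"
      unfolding digit_sum_rec [of k w, OF k w_0, of j x] using low high by (rule cong_add)
    moreover have "int (x mod k) * w 1 j + int (x div k) * (int k * w 1 j) = int x * w 1 j"
      by (simp add: mult.assoc [symmetric] distrib_right [symmetric] flip: of_nat_mult of_nat_add)
    ultimately show ?thesis
      by simp
  qed simp
qed

lemma linear_weights_fromI:
  assumes lin: "\<And>j x. A \<le> j \<Longrightarrow> [digit_sum k w j x = int x * w 1 j] (mod int L)"
  shows "linear_weights_from k L w A"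
proof -
  have "digit_sum k w j s = w s j" if "s \<in> {1..k-1}" for s j
  proof -
    have "s < k"
      using that k by auto
    then show ?thesis
      by (rule digit_sum_digit [of k w, OF k w_0])
  qed
  moreover have "digit_sum k w j k = w 1 (Suc j)" for j
    using digit_sum_rec [of k w, OF k w_0, of j k] digit_sum_digit [of k w, OF k w_0, of 1 "Suc j"]
      k w_0
    by simp
  ultimately show ?thesis
    using lin unfolding linear_weights_from_def by (metis mult.commute)
qed

lemma digit_sum_periodic:
  assumes "linear_weights_from k L w A"
  shows "[digit_sum k w 0 (n + L * k ^ A) = digit_sum k w 0 n] (mod int L)"
proof -
  define q r where "q = n div k ^ A" and "r = n mod k ^ A"
  have r: "r < k ^ A"
    using k by (simp add: r_def)
  have n: "n = r + q * k ^ A" and n': "n + L * k ^ A = r + (q + L) * k ^ A"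
    by (simp_all add: q_def r_def mod_div_mult_eq algebra_simps)
  have lin: "[digit_sum k w A x = int x * w 1 A] (mod int L)" for x
    using digit_sum_cong_linear [OF assms] by simp
  have "[int (q + L) * w 1 A = int q * w 1 A] (mod int L)"
    by (simp add: cong_iff_dvd_diff algebra_simps)
  then have "[digit_sum k w A (q + L) = digit_sum k w A q] (mod int L)"
    by (meson lin cong_sym cong_trans)
  then show ?thesis
    unfolding n' using digit_sum_split [of k w, OF k w_0 r] n by (simp add: cong_add_lcancel)
qed

lemma digit_sum_increments_periodic:
  assumes l: "0 < l" "l \<le> P"
    and per: "\<And>m. M \<le> m \<Longrightarrow> m mod l = N mod l \<Longrightarrow>
      [digit_sum k w 0 (m + P) = digit_sum k w 0 m] (mod int L)"
    and J: "M + P \<le> k ^ J" and vv': "v mod l = v' mod l"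
  shows "[digit_sum k w J (Suc v) - digit_sum k w J v =
          digit_sum k w J (Suc v') - digit_sum k w J v'] (mod int L)"
proof -
  \<comment> \<open>For \<open>u\<close> among the last \<open>P\<close> positions below \<open>k\<^sup>J\<close>, adding \<open>P\<close> to \<open>u + x k\<^sup>J\<close> carries
    once into level \<open>J\<close>; the right-hand side does not depend on \<open>x\<close>.\<close>
  have window: "[digit_sum k w J (Suc x) - digit_sum k w J x =
      digit_sum k w 0 u - digit_sum k w 0 (u + P - k ^ J)] (mod int L)"
    if u: "k ^ J - P \<le> u" "u < k ^ J" and res: "(u + x * k ^ J) mod l = N mod l" for u x
  proof -
    have small: "u + P - k ^ J < k ^ J"
      and shift: "u + x * k ^ J + P = (u + P - k ^ J) + Suc x * k ^ J"
      using u J by auto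
    have "digit_sum k w 0 (u + x * k ^ J + P) =
        digit_sum k w 0 (u + P - k ^ J) + digit_sum k w J (Suc x)"
      unfolding shift using digit_sum_split [of k w, OF k w_0 small, of 0 "Suc x"] by simp
    moreover have "digit_sum k w 0 (u + x * k ^ J) = digit_sum k w 0 u + digit_sum k w J x"
      using digit_sum_split [of k w, OF k w_0 u(2)] by simp
    moreover have "M \<le> u + x * k ^ J"
      using u J by linarith
    ultimately have "[digit_sum k w 0 (u + P - k ^ J) + digit_sum k w J (Suc x) =
        digit_sum k w 0 u + digit_sum k w J x] (mod int L)"
      using per [of "u + x * k ^ J"] res by simp
    then show ?thesis
      by (simp add: cong_iff_dvd_diff algebra_simps)
  qed
  obtain d where d: "d < l" "(k ^ J - P + v * k ^ J + d) mod l = N mod l"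
    using exists_shift_to_residue [OF l(1)] by blast
  define u where "u = k ^ J - P + d"
  have u: "k ^ J - P \<le> u" "u < k ^ J"
    using d(1) l J by (auto simp: u_def)
  have res: "(u + v * k ^ J) mod l = N mod l"
    using d(2) by (simp add: u_def algebra_simps)
  moreover have "(u + v' * k ^ J) mod l = (u + v * k ^ J) mod l"
    using vv' by (metis mod_add_right_eq mod_mult_left_eq)
  ultimately have res': "(u + v' * k ^ J) mod l = N mod l"
    by simp
  show ?thesis
    using window [OF u res] window [OF u res'] cong_sym cong_trans by blast
qed

lemma digit_sum_increment_const:
  assumes "0 < l"
    and add: "\<And>v. [digit_sum k w J (v + l) = digit_sum k w J v + digit_sum k w J l] (mod int L)"
  shows "[digit_sum k w (J + l) (Suc x) = digit_sum k w (J + l) x + w 1 (J + l)] (mod int L)"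
proof -
  have "l < k ^ l"
    using self_less_power [OF k] .
  \<comment> \<open>Adding \<open>l\<close> to \<open>d + y k\<^sup>l\<close> carries into level \<open>J + l\<close>.\<close>
  define d where "d = k ^ l - l"
  have d: "d < k ^ l"
    using \<open>0 < l\<close> \<open>l < k ^ l\<close> by (simp add: d_def)
  have low: "digit_sum k w J (d + y * k ^ l) = digit_sum k w J d + digit_sum k w (J + l) y" for y
    using digit_sum_split [of k w, OF k w_0 d] by simp
  have high: "digit_sum k w J (d + y * k ^ l + l) = digit_sum k w (J + l) (Suc y)" for y
  proof -
    have "d + y * k ^ l + l = 0 + Suc y * k ^ l"
      using \<open>l < k ^ l\<close> by (simp add: d_def)
    also have "digit_sum k w J \<dots> = digit_sum k w (J + l) (Suc y)"
      using digit_sum_split [of k w, OF k w_0, of 0 l J "Suc y"] k by simp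
    finally show ?thesis .
  qed
  have step: "[digit_sum k w (J + l) (Suc y) =
      digit_sum k w J d + digit_sum k w (J + l) y + digit_sum k w J l] (mod int L)" for y
    using add [of "d + y * k ^ l"] by (simp add: low high)
  have "digit_sum k w (J + l) 1 = w 1 (J + l)"
    using digit_sum_digit [of k w, OF k w_0] k by simp
  then have "[w 1 (J + l) = digit_sum k w J d + digit_sum k w J l] (mod int L)"
    using step [of 0] by simp
  from cong_add [OF cong_refl [of "digit_sum k w (J + l) x"] this]
  have "[digit_sum k w (J + l) x + w 1 (J + l) =
      digit_sum k w J d + digit_sum k w (J + l) x + digit_sum k w J l] (mod int L)"
    by (simp add: ac_simps)
  with step [of x] show ?thesis
    using cong_sym cong_trans by blast
qed

lemma linear_weights_from_periodic_subsequence: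
  assumes l: "0 < l" and p: "0 < p"
    and per: "\<forall>t\<ge>T.
      [digit_sum k w 0 (N + t * l) = digit_sum k w 0 (N + (t + p) * l)] (mod int L)"
  shows "\<exists>A. linear_weights_from k L w A"
proof -
  define P M where "P = p * l" and "M = N + T * l"
  have lP: "l \<le> P"
    using p by (simp add: P_def)
  have residue_periodic: "[digit_sum k w 0 (m + P) = digit_sum k w 0 m] (mod int L)"
    if m: "M \<le> m" "m mod l = N mod l" for m
  proof -
    have "l dvd m - N"
      using m by (simp add: M_def mod_eq_dvd_iff_nat [symmetric])
    then obtain t where "m - N = t * l"
      by (metis dvdE mult.commute)
    then have t: "m = N + t * l"
      using m(1) by (simp add: M_def)
    then have "T \<le> t"
      using m(1) l by (simp add: M_def)
    moreover have "m + P = N + (t + p) * l"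
      using t by (simp add: P_def algebra_simps)
    ultimately show ?thesis
      using per t cong_sym by metis
  qed
  have additive: "[digit_sum k w J (v + l) = digit_sum k w J v + digit_sum k w J l] (mod int L)"
    if "M + P \<le> J" for J v
  proof (rule cong_add_of_periodic_increments)
    have "M + P \<le> k ^ J"
      using that self_less_power [OF k, of J] by linarith
    from digit_sum_increments_periodic [OF l lP residue_periodic this]
    show "[digit_sum k w J (Suc v + l) - digit_sum k w J (v + l) =
        digit_sum k w J (Suc v) - digit_sum k w J v] (mod int L)" for v
      by simp
  qed simp
  have "[digit_sum k w j x = int x * w 1 j] (mod int L)" if "M + P + l \<le> j" for j x
  proof -
    define J where "J = j - l"
    have j: "j = J + l" and J: "M + P \<le> J"
      using that by (simp_all add: J_def)
    show ?thesis
      unfolding j using digit_sum_increment_const [OF l additive [OF J]]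
      by (intro cong_linear_of_const_increments) simp_all
  qed
  then show ?thesis
    by (blast intro: linear_weights_fromI)
qed

end

lemma TM_condition_iff_linear_weights:
  assumes "2 \<le> k"
  shows "(\<forall>s\<in>{1..k-1}. \<forall>y. \<kappa> s (A + y) mod L = (\<kappa> 1 A * s * k ^ y) mod L)
    \<longleftrightarrow> linear_weights_from k L (\<lambda>s j. int (tm_weight \<kappa> s j)) A"
proof -
  have "[int (tm_weight \<kappa> s (A + y)) = int (tm_weight \<kappa> 1 A) * int s * int k ^ y] (mod int L)
      \<longleftrightarrow> \<kappa> s (A + y) mod L = (\<kappa> 1 A * s * k ^ y) mod L" if "s \<in> {1..k-1}" for s y
    using that cong_int_iff [of "\<kappa> s (A + y)" "\<kappa> 1 A * s * k ^ y" L]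
    by (simp add: tm_weight_def cong_def)
  then show ?thesis
    by (simp add: linear_weights_from_iff [OF assms])
qed

lemma ult_periodic_TM_seq:
  assumes "inj_on a {..<L}" and "1 \<le> L" and "2 \<le> k"
    and "linear_weights_from k L (\<lambda>s j. int (tm_weight \<kappa> s j)) A"
  shows "ult_periodic (TM_seq a L k \<kappa>)"
proof -
  have "TM_seq a L k \<kappa> n = TM_seq a L k \<kappa> (n + L * k ^ A)" for n
    unfolding TM_seq_eq_iff_cong [OF assms(1-3)]
    by (rule cong_sym, rule digit_sum_periodic [OF assms(3) _ assms(4)]) simp
  moreover have "0 < L * k ^ A"
    using assms(2,3) by simp
  ultimately show ?thesis
    unfolding ult_periodic_def by blast
qed

lemma linear_weights_from_ult_periodic_TM_subsequence:
  assumes "inj_on a {..<L}" and "1 \<le> L" and "2 \<le> k"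
    and "0 < l" and "ult_periodic (\<lambda>t. TM_seq a L k \<kappa> (N + t * l))"
  shows "\<exists>A. linear_weights_from k L (\<lambda>s j. int (tm_weight \<kappa> s j)) A"
proof -
  obtain T p where "0 < p" and "\<forall>t\<ge>T.
      [digit_sum k (\<lambda>s j. int (tm_weight \<kappa> s j)) 0 (N + t * l) =
       digit_sum k (\<lambda>s j. int (tm_weight \<kappa> s j)) 0 (N + (t + p) * l)] (mod int L)"
    using assms(5) by (auto simp: ult_periodic_def TM_seq_eq_iff_cong [OF assms(1-3)] algebra_simps)
  then show ?thesis
    using linear_weights_from_periodic_subsequence [OF assms(3) _ assms(4)] by simp
qed

theorem theorem3p1:
  fixes L k :: nat and \<kappa> :: "nat \<Rightarrow> nat \<Rightarrow> nat" and a :: "nat \<Rightarrow> complex"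
  assumes "L \<ge> 2" and "k \<ge> 2"
    and "\<forall>s\<in>{1..k-1}. \<forall>n. \<kappa> s n < L"
    and "inj_on a {..<L}"
  shows "(ult_periodic (TM_seq a L k \<kappa>) \<longleftrightarrow>
           (\<exists>A::nat. \<forall>s\<in>{1..k-1}. \<forall>y::nat.
              \<kappa> s (A + y) mod L = (\<kappa> 1 A * s * k ^ y) mod L))
       \<and> (\<not> ult_periodic (TM_seq a L k \<kappa>) \<longrightarrow>
           (\<forall>N l. l > 0 \<longrightarrow> \<not> ult_periodic (\<lambda>t. TM_seq a L k \<kappa> (N + t * l))))"
proof -
  have L: "1 \<le> L"
    using assms(1) by simp
  note linear = linear_weights_from_ult_periodic_TM_subsequence [OF assms(4) L assms(2)]
  have "\<exists>A. linear_weights_from k L (\<lambda>s j. int (tm_weight \<kappa> s j)) A"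
    if "ult_periodic (TM_seq a L k \<kappa>)"
    using linear [where l = 1 and N = 0] that by simp
  then show ?thesis
    using TM_condition_iff_linear_weights [OF assms(2)] ult_periodic_TM_seq [OF assms(4) L assms(2)]
      linear
    by blast
qed

end
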